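(* Let $q,n,d,m$ be positive integers with $q\ge 2$, and let $C\subseteq[q]^n$ be a code with minimum Hamming distance at least $d$. Let $j\in\{1,\dots,n\}$ and $\alpha\in[q]$, and let $B\subseteq C$ be the set of all codewords $w\in C$ with $w_j=\alpha$. Suppose that for every coordinate $i\neq j$, every symbol of $[q]$ occurs exactly $m$ times among the entries $w_i$, $w\in B$. If $n-d$ does not divide $m(n-1)$, then for every $u\in C\setminus B$ there exists $v\in B$ with $d_H(u,v)\notin\{d,n\}$.
   Context: $[q]=\{0,1,\dots,q-1\}$. For $u,v\in[q]^n$, $d_H(u,v)$ is the number of coordinates $i$ with $u_i\neq v_i$. The minimum distance of a code is the minimum of $d_H$ over distinct codewords. *)

theory Defs
  imports Main
begin

text \<open>Words of [q]^n are lists of length n with entries in {0..<q};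
coordinates are indexed 0..n-1.\<close>

definition words :: "nat \<Rightarrow> nat \<Rightarrow> nat list set" where
  "words q n = {w. length w = n \<and> (\<forall>i<n. w ! i < q)}"

definition hamming_dist :: "nat list \<Rightarrow> nat list \<Rightarrow> nat" where
  "hamming_dist u v = card {i. i < length u \<and> u ! i \<noteq> v ! i}"

definition min_dist_ge :: "nat list set \<Rightarrow> nat \<Rightarrow> bool" where
  "min_dist_ge C d \<longleftrightarrow> (\<forall>u\<in>C. \<forall>v\<in>C. u \<noteq> v \<longrightarrow> d \<le> hamming_dist u v)"

end

theory Submission
  imports Defs
begin

text \<open>Count, for a fixed \<open>u \<in> C - B\<close>, the pairs \<open>(v, i)\<close> with \<open>v \<in> B\<close>, \<open>i \<noteq> j\<close> and
\<open>u\<^sub>i = v\<^sub>i\<close>. Since every symbol occurs exactly \<open>m\<close> times in each coordinate \<open>i \<noteq> j\<close> of \<open>B\<close>,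
there are \<open>m(n - 1)\<close> such pairs. As \<open>u\<^sub>j \<noteq> v\<^sub>j\<close>, each \<open>v\<close> contributes \<open>n - d\<^sub>H(u, v)\<close> pairs,
which is \<open>n - d\<close> or \<open>0\<close> if all distances lie in \<open>{d, n}\<close>; then \<open>n - d\<close> would divide
\<open>m(n - 1)\<close>.\<close>

lemma finite_words: "finite (words q n)"
proof -
  have "words q n \<subseteq> {xs. set xs \<subseteq> {0..<q} \<and> length xs = n}"
    by (auto simp: words_def in_set_conv_nth)
  moreover have "finite {xs. set xs \<subseteq> {0..<q} \<and> length xs = n}"
    by (rule finite_lists_length_eq) simp
  ultimately show ?thesis by (rule finite_subset)
qed

lemma hamming_dist_add_card_agree:
  assumes "length u = n"
  shows "hamming_dist u v + card {i. i < n \<and> u ! i = v ! i} = n"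
proof -
  have "{..<n} = {i. i < n \<and> u ! i \<noteq> v ! i} \<union> {i. i < n \<and> u ! i = v ! i}" by auto
  then have "n = card ({i. i < n \<and> u ! i \<noteq> v ! i} \<union> {i. i < n \<and> u ! i = v ! i})"
    by (metis card_lessThan)
  also have "\<dots> = hamming_dist u v + card {i. i < n \<and> u ! i = v ! i}"
    using assms by (subst card_Un_disjoint) (auto simp: hamming_dist_def)
  finally show ?thesis by simp
qed

lemma card_agree_off_coordinate:
  assumes "length u = n" and "u ! j \<noteq> v ! j"
  shows "int (card {i. i < n \<and> i \<noteq> j \<and> u ! i = v ! i}) = int n - int (hamming_dist u v)"
proof -
  have "{i. i < n \<and> i \<noteq> j \<and> u ! i = v ! i} = {i. i < n \<and> u ! i = v ! i}"
    using assms(2) by auto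
  with hamming_dist_add_card_agree[OF assms(1), of v] show ?thesis by simp
qed

lemma sum_card_swap:
  assumes "finite A" and "finite B"
  shows "(\<Sum>a\<in>A. card {b \<in> B. P a b}) = (\<Sum>b\<in>B. card {a \<in> A. P a b})"
proof -
  have "(\<Sum>a\<in>A. card {b \<in> B. P a b}) = (\<Sum>a\<in>A. \<Sum>b\<in>B. if P a b then 1 else (0::nat))"
    using assms(2) by (simp add: sum.If_cases Int_def)
  also have "\<dots> = (\<Sum>b\<in>B. \<Sum>a\<in>A. if P a b then 1 else (0::nat))"
    by (rule sum.swap)
  also have "\<dots> = (\<Sum>b\<in>B. card {a \<in> A. P a b})"
    using assms(1) by (simp add: sum.If_cases Int_def)
  finally show ?thesis .
qed

lemma sum_card_agree_balanced:
  assumes "finite B" and "j < n" and "\<forall>i<n. u ! i < q"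
    and "\<forall>i<n. i \<noteq> j \<longrightarrow> (\<forall>a<q. card {w \<in> B. w ! i = a} = m)"
  shows "(\<Sum>v\<in>B. card {i. i < n \<and> i \<noteq> j \<and> u ! i = v ! i}) = m * (n - 1)"
proof -
  let ?I = "{i. i < n \<and> i \<noteq> j}"
  have "(\<Sum>v\<in>B. card {i. i < n \<and> i \<noteq> j \<and> u ! i = v ! i}) = (\<Sum>v\<in>B. card {i \<in> ?I. u ! i = v ! i})"
    by simp
  also have "\<dots> = (\<Sum>i\<in>?I. card {v \<in> B. v ! i = u ! i})"
    using assms(1) by (subst sum_card_swap) (auto simp: eq_commute)
  also have "\<dots> = (\<Sum>i\<in>?I. m)"
    using assms(3,4) by (intro sum.cong) auto
  also have "\<dots> = m * (n - 1)"
  proof -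
    have "?I = {..<n} - {j}" by auto
    then show ?thesis using assms(2) by simp
  qed
  finally show ?thesis .
qed

theorem proposition5p2:
  fixes q n d m j \<alpha> :: nat and C B :: "nat list set"
  assumes "q \<ge> 2" and "n > 0" and "d > 0" and "m > 0"
    and "C \<subseteq> words q n"
    and "min_dist_ge C d"
    and "j < n" and "\<alpha> < q"
    and "B = {w \<in> C. w ! j = \<alpha>}"
    and "\<forall>i<n. i \<noteq> j \<longrightarrow> (\<forall>a<q. card {w \<in> B. w ! i = a} = m)"
    and "\<not> ((int n - int d) dvd (int m * (int n - 1)))"
  shows "\<forall>u \<in> C - B. \<exists>v \<in> B. hamming_dist u v \<notin> {d, n}"
proof (rule ballI, rule ccontr)
  fix u assume u: "u \<in> C - B" and dists: "\<not> (\<exists>v \<in> B. hamming_dist u v \<notin> {d, n})"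
  let ?agr = "\<lambda>v. card {i. i < n \<and> i \<noteq> j \<and> u ! i = v ! i}"
  have finB: "finite B" using assms(5,9) finite_words by (auto intro: finite_subset)
  have u_word: "length u = n" "\<forall>i<n. u ! i < q" using u assms(5) by (auto simp: words_def)
  have "(int n - int d) dvd int (?agr v)" if "v \<in> B" for v
  proof -
    have "u ! j \<noteq> v ! j" using u that assms(9) by auto
    moreover have "hamming_dist u v \<in> {d, n}" using dists that by blast
    ultimately show ?thesis using card_agree_off_coordinate[OF u_word(1)] by auto
  qed
  then have "(int n - int d) dvd (\<Sum>v\<in>B. int (?agr v))" by (rule dvd_sum)
  also have "(\<Sum>v\<in>B. int (?agr v)) = int m * (int n - 1)"
    using sum_card_agree_balanced[OF finB assms(7) u_word(2) assms(10)] assms(2)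
    by (simp flip: of_nat_sum add: of_nat_diff)
  finally show False using assms(11) by simp
qed

end
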